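(* For every integer $n\ge4$ there is an antiprismatic octahedron $AP_{3,4}^n$ in hyperbolic space: there is a compact regular octahedron $Q$, concentric with the $n$-akis truncated octahedron $KP_{3,4}^n$ which tiles $\mathbb{H}^3$ and lying inside it with its faces parallel to the hexagonal faces of $KP_{3,4}^n$, such that the regular antiprisms attached to the faces of $Q$ are symmetric with respect to the reflection-rotations at the hexagonal faces of $KP_{3,4}^n$.
   Context: $KP_{3,4}^n$ is a hyperbolic truncated octahedron (regular square and hexagonal faces) with pyramids $PY_4^n$ (regular square base, dihedral angle $2\pi/n$ between adjacent triangular sides, rotationally symmetric) glued to its square faces, with dimensions chosen so that $\alpha+2\beta+2\gamma=2\pi$ ($\alpha$: angle between hexagonal faces, $\beta$: between square and hexagonal faces, $\gamma$: between base and side of the pyramid); it is then a fundamental domain for the group $R_{3,4}^n$ generated by reflection-rotations: reflection in the plane of a hexagonal face followed by rotation by $\pi/3$ about the axis perpendicular through the center of that face. A regular antiprism over a face $F$ of $Q$ has $F$ as bottom, a top triangle $F'$, and lateral faces which are equilateral triangles with all edges of the same length as the edges of $F$; "symmetric" means $F'$ is the image of $F$ under the reflection-rotation at the corresponding hexagonal face. The antiprismatic octahedron $AP_{3,4}^n$ is the union of the images of the lateral triangles under $R_{3,4}^n$. *)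

theory Defs
  imports "HOL-Analysis.Analysis"
begin

text \<open>Points of Minkowski space R^{1,3} are pairs (time coordinate, spatial vector in R^3).\<close>
type_synonym mpt = "real \<times> (real^3)"

definition mink :: "mpt \<Rightarrow> mpt \<Rightarrow> real" where
  "mink x y = - fst x * fst y + snd x \<bullet> snd y"

definition hyp :: "mpt set" where
  "hyp = {x. mink x x = -1 \<and> fst x > 0}"

definition hdist :: "mpt \<Rightarrow> mpt \<Rightarrow> real" where
  "hdist x y = arcosh (- mink x y)"

definition hpoint :: "real^3 \<Rightarrow> mpt" where
  "hpoint v = (sqrt (1 + v \<bullet> v), v)"

definition horigin :: mpt where
  "horigin = (1, 0)"

definition v3 :: "real \<Rightarrow> real \<Rightarrow> real \<Rightarrow> real^3" where
  "v3 a b c = vector [a, b, c]"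

text \<open>Hyperbolic (geodesic) convex hull: hyperboloid intersected with the cone over the
  Euclidean convex hull.\<close>
definition hconv :: "mpt set \<Rightarrow> mpt set" where
  "hconv V = hyp \<inter> {c *\<^sub>R y | c y. 0 \<le> c \<and> y \<in> convex hull V}"

text \<open>Outward unit (spacelike) normal of the hyperbolic plane through a, b, c,
  oriented so that the reference point d lies strictly on the inner side.\<close>
definition outer_normal :: "mpt \<Rightarrow> mpt \<Rightarrow> mpt \<Rightarrow> mpt \<Rightarrow> mpt" where
  "outer_normal a b c d = (THE \<nu>. mink \<nu> \<nu> = 1 \<and> mink \<nu> a = 0 \<and> mink \<nu> b = 0
      \<and> mink \<nu> c = 0 \<and> mink \<nu> d < 0)"

text \<open>Interior dihedral angle between two faces of a convex region with outward unit
  normals nu1, nu2.\<close>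
definition dihedral :: "mpt \<Rightarrow> mpt \<Rightarrow> real" where
  "dihedral nu1 nu2 = arccos (- mink nu1 nu2)"

definition hrefl :: "mpt \<Rightarrow> mpt \<Rightarrow> mpt" where
  "hrefl \<nu> x = x - (2 * mink x \<nu>) *\<^sub>R \<nu>"

text \<open>Rotation by angle th about the axis through the origin with unit spatial direction u
  (Rodrigues' formula on the spatial part).\<close>
definition hrot :: "real^3 \<Rightarrow> real \<Rightarrow> mpt \<Rightarrow> mpt" where
  "hrot u th x = (fst x, cos th *\<^sub>R snd x + sin th *\<^sub>R cross3 u (snd x)
                        + ((1 - cos th) * (u \<bullet> snd x)) *\<^sub>R u)"

text \<open>Signed permutations of coordinates (the full octahedral group), acting on the spatial part.\<close>
definition oct_group :: "(real^3 \<Rightarrow> real^3) set" where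
  "oct_group = {f. \<exists>\<pi> s. bij (\<pi> :: 3 \<Rightarrow> 3) \<and> (\<forall>i. s i = 1 \<or> s i = -1)
                      \<and> f = (\<lambda>x. \<chi> i. s i * x $ \<pi> i)}"

definition sign_vecs :: "(real^3) set" where
  "sign_vecs = {\<sigma>. \<forall>i. \<sigma> $ i = 1 \<or> \<sigma> $ i = -1}"

text \<open>Truncated octahedron centred at the origin with octahedral symmetry: the hyperbolic convex
  hull of the 24 points whose spatial coordinates are the signed permutations of (p, q, 0),
  0 < q < p.  Hexagonal faces are orthogonal to the directions (+-1,+-1,+-1), square faces to
  the coordinate axes.\<close>
definition to_verts :: "real \<Rightarrow> real \<Rightarrow> mpt set" where
  "to_verts p q = {hpoint v | v. \<exists>i j k. i \<noteq> j \<and> j \<noteq> k \<and> i \<noteq> k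
        \<and> \<bar>v $ i\<bar> = p \<and> \<bar>v $ j\<bar> = q \<and> v $ k = 0}"

definition trunc_oct :: "real \<Rightarrow> real \<Rightarrow> mpt set" where
  "trunc_oct p q = hconv (to_verts p q)"

text \<open>All faces regular: hexagon-hexagon edges and hexagon-square edges have the same length
  (the angles of the faces are equal by the octahedral symmetry).\<close>
definition to_regular :: "real \<Rightarrow> real \<Rightarrow> bool" where
  "to_regular p q \<longleftrightarrow>
     hdist (hpoint (v3 p q 0)) (hpoint (v3 q p 0)) = hdist (hpoint (v3 p q 0)) (hpoint (v3 p 0 q))"

text \<open>Outward unit normal of the hexagonal face orthogonal to the direction \<sigma> (a sign vector).\<close>
definition hex_normal :: "real \<Rightarrow> real \<Rightarrow> real^3 \<Rightarrow> mpt" where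
  "hex_normal p q \<sigma> = outer_normal
      (hpoint (v3 (\<sigma>$1 * p) (\<sigma>$2 * q) 0))
      (hpoint (v3 (\<sigma>$1 * q) (\<sigma>$2 * p) 0))
      (hpoint (v3 0 (\<sigma>$2 * p) (\<sigma>$3 * q))) horigin"

definition sq_normal :: "real \<Rightarrow> real \<Rightarrow> mpt" where
  "sq_normal p q = outer_normal (hpoint (v3 p q 0)) (hpoint (v3 p 0 q)) (hpoint (v3 p (-q) 0)) horigin"

definition to_alpha :: "real \<Rightarrow> real \<Rightarrow> real" where
  "to_alpha p q = dihedral (hex_normal p q (v3 1 1 1)) (hex_normal p q (v3 1 1 (-1)))"

definition to_beta :: "real \<Rightarrow> real \<Rightarrow> real" where
  "to_beta p q = dihedral (sq_normal p q) (hex_normal p q (v3 1 1 1))"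

text \<open>Rotation by pi/2 about the first axis; it maps the square face orthogonal to the first axis
  to itself, cyclically permuting its edges.\<close>
definition rot90 :: "mpt \<Rightarrow> mpt" where
  "rot90 x = (fst x, v3 (snd x $ 1) (- snd x $ 3) (snd x $ 2))"

text \<open>A rotationally symmetric pyramid over the square face orthogonal to the positive first axis
  is given by the outward unit normal lam of the lateral face through the base edge from
  (p,q,0) to (p,0,q); the other lateral faces are its images under rot90.  The pyramid is the
  region beyond the base plane and inside the four lateral half-spaces (its apex may be a point,
  ideal, or hyperideal).\<close>
definition pyr_lateral_ok :: "real \<Rightarrow> real \<Rightarrow> mpt \<Rightarrow> bool" where
  "pyr_lateral_ok p q lam \<longleftrightarrow> mink lam lam = 1
      \<and> mink lam (hpoint (v3 p q 0)) = 0 \<and> mink lam (hpoint (v3 p 0 q)) = 0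
      \<and> mink lam (hpoint (v3 p (-q) 0)) < 0"

definition pyramid :: "real \<Rightarrow> real \<Rightarrow> mpt \<Rightarrow> mpt set" where
  "pyramid p q lam = {x \<in> hyp. mink x (sq_normal p q) \<ge> 0
      \<and> (\<forall>k::nat. k < 4 \<longrightarrow> mink x ((rot90 ^^ k) lam) \<le> 0)}"

text \<open>gamma: dihedral angle between the base and a side of the pyramid (the outward normal of the
  pyramid at its base is minus the outward normal of the square face of the truncated octahedron).\<close>
definition pyr_gamma :: "real \<Rightarrow> real \<Rightarrow> mpt \<Rightarrow> real" where
  "pyr_gamma p q lam = dihedral (- sq_normal p q) lam"

definition pyr_side_angle :: "mpt \<Rightarrow> real" where
  "pyr_side_angle lam = dihedral lam (rot90 lam)"

definition KP_data :: "nat \<Rightarrow> real \<Rightarrow> real \<Rightarrow> mpt \<Rightarrow> bool" where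
  "KP_data n p q lam \<longleftrightarrow> 0 < q \<and> q < p \<and> to_regular p q
      \<and> pyr_lateral_ok p q lam
      \<and> pyr_side_angle lam = 2 * pi / real n
      \<and> to_alpha p q + 2 * to_beta p q + 2 * pyr_gamma p q lam = 2 * pi"

definition KP_set :: "real \<Rightarrow> real \<Rightarrow> mpt \<Rightarrow> mpt set" where
  "KP_set p q lam = trunc_oct p q \<union> (\<Union>f\<in>oct_group. map_prod id f ` pyramid p q lam)"

definition refl_rot :: "real \<Rightarrow> real \<Rightarrow> real^3 \<Rightarrow> mpt \<Rightarrow> mpt" where
  "refl_rot p q \<sigma> x = hrot ((1 / sqrt 3) *\<^sub>R \<sigma>) (pi / 3) (hrefl (hex_normal p q \<sigma>) x)"

text \<open>Regular octahedron concentric with the truncated octahedron, with faces parallel to its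
  hexagonal faces (i.e. orthogonal to the directions (+-1,+-1,+-1)); its vertices are at distance
  t from the centre on the coordinate axes.\<close>
definition oct_verts :: "real \<Rightarrow> mpt set" where
  "oct_verts t = {(cosh t, (s * sinh t) *\<^sub>R axis i 1) | i s. s = 1 \<or> s = -1}"

definition oct_face :: "real \<Rightarrow> real^3 \<Rightarrow> mpt set" where
  "oct_face t \<sigma> = {(cosh t, (\<sigma> $ i * sinh t) *\<^sub>R axis i 1) | i. True}"

text \<open>Regular antiprism with bottom triangle a1 a2 a3 and top triangle b1 b2 b3: the two
  triangles and the six lateral triangles a1 a2 b1, b1 b2 a2, a2 a3 b2, b2 b3 a3, a3 a1 b3,
  b3 b1 a1 are equilateral with the common (positive) edge length.\<close>
definition reg_antiprism :: "mpt \<Rightarrow> mpt \<Rightarrow> mpt \<Rightarrow> mpt \<Rightarrow> mpt \<Rightarrow> mpt \<Rightarrow> bool" where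
  "reg_antiprism a1 a2 a3 b1 b2 b3 \<longleftrightarrow> 0 < hdist a1 a2 \<and>
     (\<forall>e\<in>{hdist a2 a3, hdist a3 a1, hdist b1 b2, hdist b2 b3, hdist b3 b1,
           hdist a1 b1, hdist a2 b1, hdist a2 b2, hdist a3 b2, hdist a3 b3, hdist a1 b3}.
        e = hdist a1 a2)"

definition sym_antiprism_over :: "real \<Rightarrow> real \<Rightarrow> real \<Rightarrow> real^3 \<Rightarrow> bool" where
  "sym_antiprism_over p q t \<sigma> \<longleftrightarrow> (\<exists>a1 a2 a3 b1 b2 b3.
      {a1, a2, a3} = oct_face t \<sigma> \<and> {b1, b2, b3} = refl_rot p q \<sigma> ` {a1, a2, a3}
      \<and> reg_antiprism a1 a2 a3 b1 b2 b3)"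

end

theory Submission
  imports Defs
begin

text \<open>
  Regularity of the faces forces \<open>p = 2 q\<close>, and then all normals are explicit: with
  \<open>r = sqrt (1 + 5 q\<^sup>2)\<close>, the hexagonal face orthogonal to the sign vector \<open>\<sigma>\<close> has unit
  normal \<open>(3 q, r \<sigma>) / sqrt (3 + 6 q\<^sup>2)\<close> and the square face \<open>(2 q, r e\<^sub>1) / sqrt (1 + q\<^sup>2)\<close>.
  For the pyramids we take the lateral normal \<open>pyr_normal q\<close>: adjacent lateral faces then meet
  at the angle \<open>arccos (2 m\<^sup>2 - 1) = 2 arccos m\<close>, \<open>m = 2 q\<^sup>2 / (1 + 2 q\<^sup>2)\<close>, so \<open>q\<close> is fixed
  by \<open>m = cos (pi / n)\<close>. Then \<open>\<alpha> / 2 + \<beta> + \<gamma> = pi\<close> is the addition formula for \<open>cos (\<alpha> / 2 + \<beta>)\<close>,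
  which needs \<open>\<beta> \<le> pi / 2\<close>, i.e. \<open>q \<ge> 1\<close>; this is where \<open>n \<ge> 4\<close> enters.

  The octahedron \<open>Q\<close> has the vertices \<open>(cosh t, \<plusminus> sinh t e\<^sub>i)\<close> with
  \<open>tanh t = 3 q / (r + sqrt (1 + 2 q\<^sup>2))\<close>; it lies in the truncated octahedron because
  \<open>tanh t \<le> 2 q / r\<close>. The three vertices of a face of \<open>Q\<close> have the same Minkowski product
  \<open>- sinh t / sqrt 3\<close> with the normal of the parallel hexagonal face, so the reflection lowers the
  product of every bottom vertex with every top vertex by \<open>2 sinh\<^sup>2 t / 3\<close>. For the lateral edges
  this exactly cancels what the rotation by \<open>pi / 3\<close> adds, so they are as long as the edges
  of \<open>Q\<close>.
\<close>

lemma v3_nth [simp]: "v3 a b c $ 1 = a" "v3 a b c $ 2 = b" "v3 a b c $ 3 = c"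
  by (simp_all add: v3_def)

lemma v3_eta: "x = v3 (x $ 1) (x $ 2) (x $ 3)"
  by (simp add: vec_eq_iff forall_3)

lemma pair_v3_cases:
  obtains x0 x1 x2 x3 where "x = (x0, v3 x1 x2 x3)"
  by (metis v3_eta surj_pair)

lemma v3_eq_iff [simp]: "v3 a b c = v3 d e f \<longleftrightarrow> a = d \<and> b = e \<and> c = f"
  by (simp add: vec_eq_iff forall_3)

lemma inner_v3 [simp]: "v3 a b c \<bullet> v3 d e f = a * d + b * e + c * f"
  by (simp add: inner_vec_def sum_3)

lemma v3_add [simp]: "v3 a b c + v3 d e f = v3 (a + d) (b + e) (c + f)"
  and v3_diff [simp]: "v3 a b c - v3 d e f = v3 (a - d) (b - e) (c - f)"
  and v3_scaleR [simp]: "k *\<^sub>R v3 a b c = v3 (k * a) (k * b) (k * c)"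
  and v3_zero: "0 = v3 0 0 0"
  and axis_v3: "axis 1 1 = v3 1 0 0" "axis 2 1 = v3 0 1 0" "axis 3 1 = v3 0 0 1"
  by (simp_all add: vec_eq_iff forall_3 axis_def)

lemma cross3_v3 [simp]:
  "cross3 (v3 a b c) (v3 d e f) = v3 (b * f - c * e) (c * d - a * f) (a * e - b * d)"
  by (simp add: cross3_def v3_def)

lemma mink_v3 [simp]:
  "mink (x0, v3 x1 x2 x3) (y0, v3 y1 y2 y3) = - x0 * y0 + x1 * y1 + x2 * y2 + x3 * y3"
  by (simp add: mink_def)

lemma hpoint_v3: "hpoint (v3 a b c) = (sqrt (1 + a * a + b * b + c * c), v3 a b c)"
  by (simp add: hpoint_def add.assoc)

lemma sign_vecs_v3:
  assumes "\<sigma> \<in> sign_vecs"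
  obtains s1 s2 s3 where "\<sigma> = v3 s1 s2 s3" "s1 * s1 = 1" "s2 * s2 = 1" "s3 * s3 = 1"
proof -
  have "\<sigma> $ i * \<sigma> $ i = 1" for i
    using assms unfolding sign_vecs_def by (cases "\<sigma> $ i = 1") auto
  then show thesis using that v3_eta by blast
qed

lemma v3_in_sign_vecs:
  "(a = 1 \<or> a = -1) \<Longrightarrow> (b = 1 \<or> b = -1) \<Longrightarrow> (c = 1 \<or> c = -1) \<Longrightarrow> v3 a b c \<in> sign_vecs"
  by (simp add: sign_vecs_def forall_3)

lemma sign_vecs_inner_self: "\<sigma> \<in> sign_vecs \<Longrightarrow> ((1 / sqrt 3) *\<^sub>R \<sigma>) \<bullet> ((1 / sqrt 3) *\<^sub>R \<sigma>) = 1"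
  by (erule sign_vecs_v3) simp

section \<open>Trigonometric facts\<close>

lemma arccos_eqI: "cos x = y \<Longrightarrow> 0 \<le> x \<Longrightarrow> x \<le> pi \<Longrightarrow> arccos y = x"
  using arccos_cos by blast

lemma arccos_double:
  fixes y :: real
  assumes "0 \<le> y" "y \<le> 1"
  shows "arccos (2 * y\<^sup>2 - 1) = 2 * arccos y"
proof (rule arccos_eqI)
  show "cos (2 * arccos y) = 2 * y\<^sup>2 - 1"
    using assms by (simp add: cos_double_cos)
  show "0 \<le> 2 * arccos y" "2 * arccos y \<le> pi"
    using assms arccos_lbound[of y] arccos_le_pi2[of y] by simp_all
qed

lemma arccos_sum_eq_pi:
  fixes x y s t :: real
  assumes "0 \<le> x" "0 \<le> y" "0 \<le> s" "0 \<le> t" "s\<^sup>2 + x\<^sup>2 = 1" "t\<^sup>2 + y\<^sup>2 = 1"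
  shows "arccos x + arccos y + arccos (s * t - x * y) = pi"
proof -
  have "x \<le> 1" "y \<le> 1"
    using assms by (smt (verit) power2_le_imp_le zero_le_power2 power_one)+
  moreover have "sqrt (1 - x\<^sup>2) = s" "sqrt (1 - y\<^sup>2) = t"
    using assms by (simp_all add: real_sqrt_unique)
  ultimately have "arccos (s * t - x * y) = pi - (arccos x + arccos y)"
    using assms(1,2) arccos_lbound[of x] arccos_lbound[of y] arccos_le_pi2[of x] arccos_le_pi2[of y]
    by (intro arccos_eqI) (simp_all add: cos_add sin_arccos)
  then show ?thesis by simp
qed

lemma tanh_artanh_real:
  fixes x :: real
  assumes "-1 < x" "x < 1"
  shows "tanh (artanh x) = x"
proof -
  have E: "exp (- 2 * artanh x) = (1 - x) / (1 + x)"
    using assms by (simp add: artanh_def exp_minus exp_ln)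
  show ?thesis
    unfolding tanh_real_altdef E using assms by (simp add: field_simps)
qed

lemma cos_pi_div_bounds:
  assumes "n \<ge> 4"
  shows "2 / 3 \<le> cos (pi / real n)" "cos (pi / real n) < 1"
proof -
  have "pi / real n \<le> pi / 4"
    using assms by (intro divide_left_mono) auto
  then have n: "0 < pi / real n" "pi / real n \<le> pi / 4" "pi / real n \<le> pi"
    using assms pi_gt_zero by (simp_all, linarith)
  have "cos (pi / 4) \<le> cos (pi / real n)"
    using n by (subst cos_mono_le_eq) simp_all
  moreover have "4 / 3 \<le> sqrt 2" by (rule real_le_rsqrt) (simp add: power2_eq_square)
  ultimately show "2 / 3 \<le> cos (pi / real n)" unfolding cos_45 by simp
  have "cos (pi / real n) < cos 0"
    using n by (subst cos_mono_less_eq) simp_all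
  then show "cos (pi / real n) < 1" by simp
qed

section \<open>Isometries of the hyperboloid\<close>

lemma mink_commute: "mink x y = mink y x"
  by (simp add: mink_def inner_commute)

lemma mink_diff_scaleR: "mink x (y - c *\<^sub>R z) = mink x y - c * mink x z"
  "mink (y - c *\<^sub>R z) x = mink y x - c * mink z x"
  by (simp_all add: mink_def inner_diff_right inner_diff_left algebra_simps)

lemma mink_scaleR [simp]: "mink (c *\<^sub>R x) y = c * mink x y" "mink x (c *\<^sub>R y) = c * mink x y"
  by (simp_all add: mink_def algebra_simps)

lemma mink_uminus_left [simp]: "mink (- x) y = - mink x y"
  by (simp add: mink_def)

lemma hrefl_mink:
  assumes "mink \<nu> \<nu> = 1"
  shows "mink (hrefl \<nu> x) (hrefl \<nu> y) = mink x y"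
  by (simp add: hrefl_def mink_diff_scaleR assms mink_commute[of \<nu> x] mink_commute[of \<nu> y]
      algebra_simps)

lemma hrot_mink:
  assumes "u \<bullet> u = 1"
  shows "mink (hrot u \<theta> x) (hrot u \<theta> y) = mink x y"
proof -
  obtain u1 u2 u3 where u: "u = v3 u1 u2 u3" by (metis v3_eta)
  obtain x1 x2 x3 y1 y2 y3 where xy: "snd x = v3 x1 x2 x3" "snd y = v3 y1 y2 y3"
    by (metis v3_eta)
  have unit: "u1 * u1 + u2 * u2 + u3 * u3 = 1" using assms u by simp
  have pyth: "cos \<theta> * cos \<theta> + sin \<theta> * sin \<theta> = 1"
    by (metis power2_eq_square sin_cos_squared_add2)
  show ?thesis
    unfolding hrot_def mink_def by (simp add: u xy) (use unit pyth in algebra)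
qed

lemma hrot_diff_scaleR: "hrot u \<theta> (x - c *\<^sub>R y) = hrot u \<theta> x - c *\<^sub>R hrot u \<theta> y"
proof -
  obtain u1 u2 u3 where u: "u = v3 u1 u2 u3" by (metis v3_eta)
  obtain x1 x2 x3 y1 y2 y3 where xy: "snd x = v3 x1 x2 x3" "snd y = v3 y1 y2 y3"
    by (metis v3_eta)
  show ?thesis
    unfolding hrot_def by (simp add: u xy algebra_simps)
qed

lemma hrot_axis:
  assumes "u \<bullet> u = 1"
  shows "hrot u \<theta> (a, k *\<^sub>R u) = (a, k *\<^sub>R u)"
  using assms by (simp add: hrot_def cross_mult_right algebra_simps)

lemma mink_hrot_hrefl:
  assumes "u \<bullet> u = 1" and "snd \<nu> = k *\<^sub>R u"
  shows "mink x (hrot u \<theta> (hrefl \<nu> y)) = mink x (hrot u \<theta> y) - 2 * mink y \<nu> * mink x \<nu>"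
proof -
  have "hrot u \<theta> \<nu> = \<nu>"
    using hrot_axis[OF assms(1), where a = "fst \<nu>" and k = k and \<theta> = \<theta>] assms(2)
    by (metis prod.collapse)
  then show ?thesis
    by (simp add: hrefl_def hrot_diff_scaleR mink_diff_scaleR)
qed

lemma hrot_pi_div_3_v3:
  "hrot ((1 / sqrt 3) *\<^sub>R v3 s1 s2 s3) (pi / 3) (x0, v3 x1 x2 x3) =
   (x0, v3 (x1 / 2 + (s2 * x3 - s3 * x2) / 2 + (s1 * x1 + s2 * x2 + s3 * x3) * s1 / 6)
           (x2 / 2 + (s3 * x1 - s1 * x3) / 2 + (s1 * x1 + s2 * x2 + s3 * x3) * s2 / 6)
           (x3 / 2 + (s1 * x2 - s2 * x1) / 2 + (s1 * x1 + s2 * x2 + s3 * x3) * s3 / 6))"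
proof -
  have "sqrt 3 * sqrt 3 = (3::real)" by simp
  then show ?thesis unfolding hrot_def sin_60 cos_60 by (simp add: field_simps)
qed

section \<open>The truncated octahedron with regular faces\<close>

lemma outer_normal_eqI:
  assumes "mink \<nu> \<nu> = 1" "mink \<nu> a = 0" "mink \<nu> b = 0" "mink \<nu> c = 0" "mink \<nu> d < 0"
    and line: "\<And>\<mu>. mink \<mu> a = 0 \<Longrightarrow> mink \<mu> b = 0 \<Longrightarrow> mink \<mu> c = 0 \<Longrightarrow> \<exists>k. \<mu> = k *\<^sub>R \<nu>"
  shows "outer_normal a b c d = \<nu>"
  unfolding outer_normal_def
proof (rule the_equality)
  fix \<mu>
  assume \<mu>: "mink \<mu> \<mu> = 1 \<and> mink \<mu> a = 0 \<and> mink \<mu> b = 0 \<and> mink \<mu> c = 0 \<and> mink \<mu> d < 0"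
  then obtain k where k: "\<mu> = k *\<^sub>R \<nu>" using line by blast
  have "k * k = 1" using \<mu> k assms(1) by simp
  moreover have "k > 0" using \<mu> k assms(5) by (simp add: mult_less_0_iff)
  ultimately have "k = 1" using square_eq_1_iff[of k] by auto
  then show "\<mu> = \<nu>" using k by simp
qed (use assms in auto)

lemma to_regular_iff:
  assumes "0 < q" "q < p"
  shows "to_regular p q \<longleftrightarrow> p = 2 * q"
proof -
  define R where "R = 1 + p * p + q * q"
  have "R > 0" unfolding R_def by (simp add: add_pos_nonneg)
  have hp: "hpoint (v3 p q 0) = (sqrt R, v3 p q 0)" "hpoint (v3 q p 0) = (sqrt R, v3 q p 0)"
    "hpoint (v3 p 0 q) = (sqrt R, v3 p 0 q)"
    unfolding hpoint_v3 R_def by (simp_all add: algebra_simps)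
  have "to_regular p q \<longleftrightarrow> arcosh (1 + (p - q)\<^sup>2) = arcosh (1 + q\<^sup>2)"
    using \<open>R > 0\<close> unfolding to_regular_def hdist_def hp R_def
    by (simp add: algebra_simps power2_eq_square)
  also have "\<dots> \<longleftrightarrow> (p - q)\<^sup>2 = q\<^sup>2"
    by (metis add_left_cancel cosh_arcosh_real le_add_same_cancel1 zero_le_power2)
  also have "\<dots> \<longleftrightarrow> p = 2 * q"
    using assms by (auto simp: power2_eq_iff)
  finally show ?thesis .
qed

lemma hpoint_square_face_vertex:
  "b * b + c * c = q\<^sup>2 \<Longrightarrow> hpoint (v3 (2 * q) b c) = (sqrt (1 + 5 * q\<^sup>2), v3 (2 * q) b c)"
  unfolding hpoint_v3 by (simp add: power2_eq_square add.assoc)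

lemma hex_face_normal_line:
  assumes "q > 0" "r > 0" "s1 * s1 = 1" "s2 * s2 = 1" "s3 * s3 = 1"
    and "mink \<mu> (r, v3 (s1 * (2 * q)) (s2 * q) 0) = 0"
      "mink \<mu> (r, v3 (s1 * q) (s2 * (2 * q)) 0) = 0"
      "mink \<mu> (r, v3 0 (s2 * (2 * q)) (s3 * q)) = 0"
  shows "\<exists>k. \<mu> = k *\<^sub>R (3 * q, r *\<^sub>R v3 s1 s2 s3)"
proof -
  obtain x0 y1 y2 y3 where \<mu>: "\<mu> = (x0, v3 y1 y2 y3)" by (rule pair_v3_cases)
  have E1: "x0 * r = 2 * q * (s1 * y1) + q * (s2 * y2)"
    and E2: "x0 * r = q * (s1 * y1) + 2 * q * (s2 * y2)"
    and E3: "x0 * r = 2 * q * (s2 * y2) + q * (s3 * y3)"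
    using assms(6-8) unfolding \<mu> by (simp_all add: algebra_simps)
  define z where "z = s1 * y1"
  have "s2 * y2 = z" using E1 E2 assms(1) unfolding z_def by simp
  then have y2: "y2 = s2 * z" using assms(4) by (metis mult.assoc mult_1)
  have "s3 * y3 = z" using E1 E3 \<open>s2 * y2 = z\<close> assms(1) unfolding z_def by simp
  then have y3: "y3 = s3 * z" using assms(5) by (metis mult.assoc mult_1)
  have y1: "y1 = s1 * z" using assms(3) unfolding z_def by (metis mult.assoc mult_1)
  have "x0 * r = 3 * q * z" using E1 \<open>s2 * y2 = z\<close> unfolding z_def by simp
  then have "\<mu> = (z / r) *\<^sub>R (3 * q, r *\<^sub>R v3 s1 s2 s3)"
    using assms(2) unfolding \<mu> y1 y2 y3 by (simp add: field_simps)
  then show ?thesis ..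
qed

lemma hex_normal_eq:
  assumes q: "q > 0" and "\<sigma> \<in> sign_vecs"
  shows "hex_normal (2 * q) q \<sigma>
    = (1 / sqrt (3 + 6 * q\<^sup>2)) *\<^sub>R (3 * q, sqrt (1 + 5 * q\<^sup>2) *\<^sub>R \<sigma>)"
proof -
  obtain s1 s2 s3 where \<sigma>: "\<sigma> = v3 s1 s2 s3" and s: "s1 * s1 = 1" "s2 * s2 = 1" "s3 * s3 = 1"
    using assms(2) by (rule sign_vecs_v3)
  define r \<kappa> where "r = sqrt (1 + 5 * q\<^sup>2)" and "\<kappa> = 1 / sqrt (3 + 6 * q\<^sup>2)"
  have r: "r > 0" "r * r = 1 + 5 * q\<^sup>2" unfolding r_def by (simp_all add: add_pos_nonneg)
  have "3 + 6 * q\<^sup>2 > 0" by (simp add: add_pos_nonneg)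
  then have \<kappa>: "\<kappa> > 0" "\<kappa> * \<kappa> * (3 + 6 * q\<^sup>2) = 1"
    unfolding \<kappa>_def by (simp_all add: field_simps)
  have "1 + (s1 * (2 * q)) * (s1 * (2 * q)) + (s2 * q) * (s2 * q) + 0 * 0 = 1 + 5 * q\<^sup>2"
    "1 + (s1 * q) * (s1 * q) + (s2 * (2 * q)) * (s2 * (2 * q)) + 0 * 0 = 1 + 5 * q\<^sup>2"
    "1 + 0 * 0 + (s2 * (2 * q)) * (s2 * (2 * q)) + (s3 * q) * (s3 * q) = 1 + 5 * q\<^sup>2"
    using s by (simp_all add: power2_eq_square) algebra+
  then have verts: "hpoint (v3 (s1 * (2 * q)) (s2 * q) 0) = (r, v3 (s1 * (2 * q)) (s2 * q) 0)"
    "hpoint (v3 (s1 * q) (s2 * (2 * q)) 0) = (r, v3 (s1 * q) (s2 * (2 * q)) 0)"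
    "hpoint (v3 0 (s2 * (2 * q)) (s3 * q)) = (r, v3 0 (s2 * (2 * q)) (s3 * q))"
    unfolding hpoint_v3 r_def by simp_all
  show ?thesis
    unfolding hex_normal_def \<sigma> v3_nth verts \<kappa>_def[symmetric] r_def[symmetric]
  proof (rule outer_normal_eqI)
    show "mink (\<kappa> *\<^sub>R (3 * q, r *\<^sub>R v3 s1 s2 s3)) (\<kappa> *\<^sub>R (3 * q, r *\<^sub>R v3 s1 s2 s3)) = 1"
      using r(2) \<kappa>(2) s by (simp add: power2_eq_square) algebra
    show "mink (\<kappa> *\<^sub>R (3 * q, r *\<^sub>R v3 s1 s2 s3)) (r, v3 (s1 * (2 * q)) (s2 * q) 0) = 0"
      "mink (\<kappa> *\<^sub>R (3 * q, r *\<^sub>R v3 s1 s2 s3)) (r, v3 (s1 * q) (s2 * (2 * q)) 0) = 0"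
      "mink (\<kappa> *\<^sub>R (3 * q, r *\<^sub>R v3 s1 s2 s3)) (r, v3 0 (s2 * (2 * q)) (s3 * q)) = 0"
      using s by simp_all algebra+
    show "mink (\<kappa> *\<^sub>R (3 * q, r *\<^sub>R v3 s1 s2 s3)) horigin < 0"
      using q \<kappa>(1) by (simp add: horigin_def v3_zero)
  next
    fix \<mu>
    assume "mink \<mu> (r, v3 (s1 * (2 * q)) (s2 * q) 0) = 0"
      "mink \<mu> (r, v3 (s1 * q) (s2 * (2 * q)) 0) = 0" "mink \<mu> (r, v3 0 (s2 * (2 * q)) (s3 * q)) = 0"
    then obtain k where "\<mu> = k *\<^sub>R (3 * q, r *\<^sub>R v3 s1 s2 s3)"
      using hex_face_normal_line[OF q r(1) s] by blast
    then have "\<mu> = (k / \<kappa>) *\<^sub>R (\<kappa> *\<^sub>R (3 * q, r *\<^sub>R v3 s1 s2 s3))"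
      using \<kappa>(1) by simp
    then show "\<exists>k. \<mu> = k *\<^sub>R (\<kappa> *\<^sub>R (3 * q, r *\<^sub>R v3 s1 s2 s3))" ..
  qed
qed

lemma mink_hex_normal_self:
  assumes "q > 0" "\<sigma> \<in> sign_vecs"
  shows "mink (hex_normal (2 * q) q \<sigma>) (hex_normal (2 * q) q \<sigma>) = 1"
proof -
  obtain s1 s2 s3 where \<sigma>: "\<sigma> = v3 s1 s2 s3" and s: "s1 * s1 = 1" "s2 * s2 = 1" "s3 * s3 = 1"
    using assms(2) by (rule sign_vecs_v3)
  define \<kappa> r where "\<kappa> = 1 / sqrt (3 + 6 * q\<^sup>2)" and "r = sqrt (1 + 5 * q\<^sup>2)"
  have "3 + 6 * q\<^sup>2 > 0" by (simp add: add_pos_nonneg)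
  then have "\<kappa> * \<kappa> * (3 + 6 * q\<^sup>2) = 1" "r * r = 1 + 5 * q\<^sup>2"
    unfolding \<kappa>_def r_def by simp_all
  then have "mink (\<kappa> *\<^sub>R (3 * q, r *\<^sub>R v3 s1 s2 s3)) (\<kappa> *\<^sub>R (3 * q, r *\<^sub>R v3 s1 s2 s3)) = 1"
    using s by (simp add: power2_eq_square) algebra
  then show ?thesis
    using hex_normal_eq[OF assms] unfolding \<sigma> \<kappa>_def r_def by simp
qed

lemma snd_hex_normal:
  assumes "q > 0" "\<sigma> \<in> sign_vecs"
  shows "snd (hex_normal (2 * q) q \<sigma>)
    = (sqrt (1 + 5 * q\<^sup>2) * sqrt 3 / sqrt (3 + 6 * q\<^sup>2)) *\<^sub>R ((1 / sqrt 3) *\<^sub>R \<sigma>)"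
  using hex_normal_eq[OF assms] by simp

lemma sq_normal_eq:
  assumes q: "q > 0"
  shows "sq_normal (2 * q) q = (1 / sqrt (1 + q\<^sup>2)) *\<^sub>R (2 * q, v3 (sqrt (1 + 5 * q\<^sup>2)) 0 0)"
proof -
  define r \<kappa> where "r = sqrt (1 + 5 * q\<^sup>2)" and "\<kappa> = 1 / sqrt (1 + q\<^sup>2)"
  have r: "r > 0" "r * r = 1 + 5 * q\<^sup>2" unfolding r_def by (simp_all add: add_pos_nonneg)
  have "1 + q\<^sup>2 > 0" by (simp add: add_pos_nonneg)
  then have \<kappa>: "\<kappa> > 0" "\<kappa> * \<kappa> * (1 + q\<^sup>2) = 1"
    unfolding \<kappa>_def by (simp_all add: field_simps)
  have verts: "hpoint (v3 (2 * q) q 0) = (r, v3 (2 * q) q 0)"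
    "hpoint (v3 (2 * q) 0 q) = (r, v3 (2 * q) 0 q)"
    "hpoint (v3 (2 * q) (- q) 0) = (r, v3 (2 * q) (- q) 0)"
    unfolding r_def by (simp_all add: hpoint_square_face_vertex power2_eq_square)
  show ?thesis
    unfolding sq_normal_def verts \<kappa>_def[symmetric] r_def[symmetric]
  proof (rule outer_normal_eqI)
    show "mink (\<kappa> *\<^sub>R (2 * q, v3 r 0 0)) (\<kappa> *\<^sub>R (2 * q, v3 r 0 0)) = 1"
      using r(2) \<kappa>(2) by (simp add: power2_eq_square algebra_simps)
    show "mink (\<kappa> *\<^sub>R (2 * q, v3 r 0 0)) (r, v3 (2 * q) q 0) = 0"
      "mink (\<kappa> *\<^sub>R (2 * q, v3 r 0 0)) (r, v3 (2 * q) 0 q) = 0"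
      "mink (\<kappa> *\<^sub>R (2 * q, v3 r 0 0)) (r, v3 (2 * q) (- q) 0) = 0"
      by simp_all
    show "mink (\<kappa> *\<^sub>R (2 * q, v3 r 0 0)) horigin < 0"
      using q \<kappa>(1) by (simp add: horigin_def v3_zero)
  next
    fix \<mu>
    assume "mink \<mu> (r, v3 (2 * q) q 0) = 0" "mink \<mu> (r, v3 (2 * q) 0 q) = 0"
      "mink \<mu> (r, v3 (2 * q) (- q) 0) = 0"
    moreover obtain x0 y1 y2 y3 where \<mu>: "\<mu> = (x0, v3 y1 y2 y3)" by (rule pair_v3_cases)
    ultimately have "y2 = 0" "y3 = 0" "x0 * r = 2 * q * y1"
      using q by (simp_all add: algebra_simps)
    then have "\<mu> = (y1 / (r * \<kappa>)) *\<^sub>R (\<kappa> *\<^sub>R (2 * q, v3 r 0 0))"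
      using r(1) \<kappa>(1) unfolding \<mu> by (simp add: field_simps)
    then show "\<exists>k. \<mu> = k *\<^sub>R (\<kappa> *\<^sub>R (2 * q, v3 r 0 0))" ..
  qed
qed

lemma to_alpha_eq:
  assumes q: "q > 0"
  shows "to_alpha (2 * q) q = arccos ((4 * q\<^sup>2 - 1) / (3 + 6 * q\<^sup>2))"
proof -
  define \<kappa> r where "\<kappa> = 1 / sqrt (3 + 6 * q\<^sup>2)" and "r = sqrt (1 + 5 * q\<^sup>2)"
  have "- mink (\<kappa> *\<^sub>R (3 * q, r *\<^sub>R v3 1 1 1)) (\<kappa> *\<^sub>R (3 * q, r *\<^sub>R v3 1 1 (- 1)))
      = \<kappa> * \<kappa> * (9 * q\<^sup>2 - r * r)"
    by (simp add: algebra_simps power2_eq_square)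
  also have "\<dots> = (9 * q\<^sup>2 - (1 + 5 * q\<^sup>2)) / (3 + 6 * q\<^sup>2)"
    unfolding \<kappa>_def r_def by (simp add: add_pos_nonneg)
  also have "\<dots> = (4 * q\<^sup>2 - 1) / (3 + 6 * q\<^sup>2)"
    by simp
  finally show ?thesis
    unfolding to_alpha_def dihedral_def \<kappa>_def r_def
    using hex_normal_eq[OF q v3_in_sign_vecs] by simp
qed

lemma to_beta_eq:
  assumes q: "q > 0"
  shows "to_beta (2 * q) q = arccos ((q\<^sup>2 - 1) / (sqrt (1 + q\<^sup>2) * sqrt (3 + 6 * q\<^sup>2)))"
proof -
  define \<kappa> \<iota> r where "\<kappa> = 1 / sqrt (3 + 6 * q\<^sup>2)" and "\<iota> = 1 / sqrt (1 + q\<^sup>2)"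
    and "r = sqrt (1 + 5 * q\<^sup>2)"
  have "- mink (\<iota> *\<^sub>R (2 * q, v3 r 0 0)) (\<kappa> *\<^sub>R (3 * q, r *\<^sub>R v3 1 1 1))
      = \<iota> * \<kappa> * (6 * q\<^sup>2 - r * r)"
    by (simp add: algebra_simps power2_eq_square)
  also have "\<dots> = (6 * q\<^sup>2 - (1 + 5 * q\<^sup>2)) / (sqrt (1 + q\<^sup>2) * sqrt (3 + 6 * q\<^sup>2))"
    unfolding \<kappa>_def \<iota>_def r_def by (simp add: add_pos_nonneg)
  also have "\<dots> = (q\<^sup>2 - 1) / (sqrt (1 + q\<^sup>2) * sqrt (3 + 6 * q\<^sup>2))"
    by simp
  finally show ?thesis
    unfolding to_beta_def dihedral_def \<kappa>_def \<iota>_def r_def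
    using hex_normal_eq[OF q v3_in_sign_vecs] sq_normal_eq[OF q] by simp
qed

section \<open>The pyramids and the angle condition\<close>

definition pyr_normal :: "real \<Rightarrow> mpt" where
  "pyr_normal q = (1 / (1 + 2 * q\<^sup>2)) *\<^sub>R
      (2 * q * sqrt (1 + 5 * q\<^sup>2), v3 (1 + 4 * q\<^sup>2) (2 * q\<^sup>2) (2 * q\<^sup>2))"

lemma pyr_lateral_ok_pyr_normal:
  assumes "q > 0"
  shows "pyr_lateral_ok (2 * q) q (pyr_normal q)"
proof -
  define r \<kappa> where "r = sqrt (1 + 5 * q\<^sup>2)" and "\<kappa> = 1 / (1 + 2 * q\<^sup>2)"
  define lam where "lam = \<kappa> *\<^sub>R (2 * q * r, v3 (1 + 4 * q\<^sup>2) (2 * q\<^sup>2) (2 * q\<^sup>2))"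
  have r: "r * r = 1 + 5 * q\<^sup>2" unfolding r_def by simp
  have "1 + 2 * q\<^sup>2 > 0" by (simp add: add_pos_nonneg)
  then have \<kappa>: "\<kappa> > 0" "\<kappa> * (1 + 2 * q\<^sup>2) = 1" unfolding \<kappa>_def by simp_all
  have verts: "hpoint (v3 (2 * q) q 0) = (r, v3 (2 * q) q 0)"
    "hpoint (v3 (2 * q) 0 q) = (r, v3 (2 * q) 0 q)"
    "hpoint (v3 (2 * q) (- q) 0) = (r, v3 (2 * q) (- q) 0)"
    unfolding r_def by (simp_all add: hpoint_square_face_vertex power2_eq_square)
  have "mink lam lam = (\<kappa> * (1 + 2 * q\<^sup>2)) * (\<kappa> * (1 + 2 * q\<^sup>2))"
    using r unfolding lam_def by (simp add: power2_eq_square) algebra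
  moreover have "mink lam (r, v3 (2 * q) b c) = \<kappa> * 2 * q\<^sup>2 * (b + c - q)" for b c
    using r unfolding lam_def by (simp add: power2_eq_square) algebra
  ultimately have "mink lam lam = 1" "mink lam (r, v3 (2 * q) q 0) = 0"
    "mink lam (r, v3 (2 * q) 0 q) = 0" "mink lam (r, v3 (2 * q) (- q) 0) < 0"
    using \<kappa> assms by (simp_all add: mult_pos_pos)
  then show ?thesis
    unfolding pyr_lateral_ok_def verts pyr_normal_def \<kappa>_def[symmetric] r_def[symmetric]
      lam_def[symmetric]
    by blast
qed

lemma pyr_gamma_pyr_normal:
  assumes q: "q > 0"
  shows "pyr_gamma (2 * q) q (pyr_normal q)
    = arccos (sqrt (1 + 5 * q\<^sup>2) / (sqrt (1 + q\<^sup>2) * (1 + 2 * q\<^sup>2)))"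
proof -
  define r \<kappa> \<iota> where "r = sqrt (1 + 5 * q\<^sup>2)" and "\<kappa> = 1 / (1 + 2 * q\<^sup>2)"
    and "\<iota> = 1 / sqrt (1 + q\<^sup>2)"
  have "- mink (- (\<iota> *\<^sub>R (2 * q, v3 r 0 0)))
      (\<kappa> *\<^sub>R (2 * q * r, v3 (1 + 4 * q\<^sup>2) (2 * q\<^sup>2) (2 * q\<^sup>2))) = \<iota> * \<kappa> * r"
    unfolding mink_uminus_left by (simp add: algebra_simps power2_eq_square)
  also have "\<dots> = r / (sqrt (1 + q\<^sup>2) * (1 + 2 * q\<^sup>2))"
    unfolding \<iota>_def \<kappa>_def by simp
  finally show ?thesis
    unfolding pyr_gamma_def dihedral_def sq_normal_eq[OF q] pyr_normal_def
      r_def[symmetric] \<kappa>_def[symmetric] \<iota>_def[symmetric] by simp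
qed

lemma rot90_v3 [simp]: "rot90 (x0, v3 a b c) = (x0, v3 a (- c) b)"
  by (simp add: rot90_def)

lemma pyr_side_angle_pyr_normal:
  "pyr_side_angle (pyr_normal q) = arccos (2 * (2 * q\<^sup>2 / (1 + 2 * q\<^sup>2))\<^sup>2 - 1)"
proof -
  define r \<kappa> where "r = sqrt (1 + 5 * q\<^sup>2)" and "\<kappa> = 1 / (1 + 2 * q\<^sup>2)"
  have r: "r * r = 1 + 5 * q\<^sup>2" unfolding r_def by simp
  have "1 + 2 * q\<^sup>2 > 0" by (simp add: add_pos_nonneg)
  then have \<kappa>: "\<kappa> * (1 + 2 * q\<^sup>2) = 1" unfolding \<kappa>_def by simp
  have "- mink (\<kappa> *\<^sub>R (2 * q * r, v3 (1 + 4 * q\<^sup>2) (2 * q\<^sup>2) (2 * q\<^sup>2)))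
      (rot90 (\<kappa> *\<^sub>R (2 * q * r, v3 (1 + 4 * q\<^sup>2) (2 * q\<^sup>2) (2 * q\<^sup>2))))
      = 2 * (2 * q\<^sup>2 * \<kappa>)\<^sup>2 - 1"
    using r \<kappa> by (simp add: power2_eq_square) algebra
  then show ?thesis
    unfolding pyr_side_angle_def dihedral_def pyr_normal_def
    by (simp add: \<kappa>_def r_def)
qed

lemma truncated_octahedron_angle_sum:
  fixes q :: real
  assumes "q \<ge> 1"
  shows "arccos ((4 * q\<^sup>2 - 1) / (3 + 6 * q\<^sup>2))
      + 2 * arccos ((q\<^sup>2 - 1) / (sqrt (1 + q\<^sup>2) * sqrt (3 + 6 * q\<^sup>2)))
      + 2 * arccos (sqrt (1 + 5 * q\<^sup>2) / (sqrt (1 + q\<^sup>2) * (1 + 2 * q\<^sup>2))) = 2 * pi"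
proof -
  define u w r e where "u = sqrt (1 + q\<^sup>2)" and "w = sqrt (3 + 6 * q\<^sup>2)"
    and "r = sqrt (1 + 5 * q\<^sup>2)" and "e = sqrt (2 + q\<^sup>2)"
  have pos: "u > 0" "w > 0" "r > 0" "e > 0" "1 + 2 * q\<^sup>2 > 0"
    unfolding u_def w_def r_def e_def by (simp_all add: add_pos_nonneg)
  have sq: "u * u = 1 + q\<^sup>2" "w * w = 3 + 6 * q\<^sup>2" "r * r = 1 + 5 * q\<^sup>2" "e * e = 2 + q\<^sup>2"
    unfolding u_def w_def r_def e_def by simp_all
  define x y s t where "x = r / w" and "y = (q\<^sup>2 - 1) / (u * w)"
    and "s = e / w" and "t = e * r / (u * w)"
  have "e * e + r * r = w * w" using sq by simp
  then have "s\<^sup>2 + x\<^sup>2 = 1"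
    unfolding s_def x_def using pos by (simp add: field_simps power2_eq_square)
  have "(e * r) * (e * r) + (q\<^sup>2 - 1) * (q\<^sup>2 - 1) = (u * w) * (u * w)"
    using sq by algebra
  then have "t\<^sup>2 + y\<^sup>2 = 1"
    unfolding t_def y_def using pos by (simp add: field_simps power2_eq_square)
  have "s * t - x * y = r * (e * e - (q\<^sup>2 - 1)) / (u * (w * w))"
    unfolding s_def t_def x_def y_def using pos by (simp add: field_simps)
  also have "\<dots> = (3 * r) / (3 * (u * (1 + 2 * q\<^sup>2)))"
    unfolding sq by (simp add: algebra_simps)
  also have "\<dots> = r / (u * (1 + 2 * q\<^sup>2))"
    by simp
  finally have "arccos x + arccos y + arccos (r / (u * (1 + 2 * q\<^sup>2))) = pi"
    using arccos_sum_eq_pi[OF _ _ _ _ \<open>s\<^sup>2 + x\<^sup>2 = 1\<close> \<open>t\<^sup>2 + y\<^sup>2 = 1\<close>] pos assms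
    unfolding x_def y_def s_def t_def by (simp add: one_le_power)
  moreover have "x \<le> 1"
    using \<open>s\<^sup>2 + x\<^sup>2 = 1\<close> by (smt (verit) power2_le_imp_le zero_le_power2 power_one)
  then have "arccos (2 * x\<^sup>2 - 1) = 2 * arccos x"
    using pos by (intro arccos_double) (simp_all add: x_def)
  moreover have "2 * x\<^sup>2 - 1 = (4 * q\<^sup>2 - 1) / (3 + 6 * q\<^sup>2)"
    unfolding x_def using pos sq by (simp add: field_simps power2_eq_square)
  ultimately show ?thesis
    unfolding u_def[symmetric] w_def[symmetric] r_def[symmetric] x_def y_def by simp
qed

lemma KP_data_pyr_normal:
  assumes n: "n \<ge> 4" and q: "q > 0" and m: "2 * q\<^sup>2 / (1 + 2 * q\<^sup>2) = cos (pi / real n)"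
  shows "KP_data n (2 * q) q (pyr_normal q)"
proof -
  have "1 + 2 * q\<^sup>2 > 0" by (simp add: add_pos_nonneg)
  then have "1 \<le> q\<^sup>2"
    using cos_pi_div_bounds(1)[OF n] unfolding m[symmetric] by (simp add: field_simps)
  then have "q \<ge> 1" using power2_le_imp_le[of 1 q] q by simp
  have "0 \<le> 2 * pi / real n" "2 * pi / real n \<le> pi" using n by (simp_all add: field_simps)
  then have "arccos (cos (2 * pi / real n)) = 2 * pi / real n" by (rule arccos_cos)
  then have side: "pyr_side_angle (pyr_normal q) = 2 * pi / real n"
    unfolding pyr_side_angle_pyr_normal m cos_double_cos[of "pi / real n", symmetric]
    by (simp add: power2_eq_square)
  show ?thesis
    unfolding KP_data_def using to_regular_iff[of q "2 * q"] q side
      pyr_lateral_ok_pyr_normal to_alpha_eq to_beta_eq pyr_gamma_pyr_normal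
      truncated_octahedron_angle_sum[OF \<open>q \<ge> 1\<close>] by simp
qed

lemma KP_data_exists:
  assumes n: "n \<ge> 4"
  shows "\<exists>p q lam. KP_data n p q lam"
proof -
  define m where "m = cos (pi / real n)"
  define q where "q = sqrt (m / (2 * (1 - m)))"
  have m: "2 / 3 \<le> m" "m < 1" using cos_pi_div_bounds[OF n] unfolding m_def by simp_all
  then have "q > 0" "q\<^sup>2 = m / (2 * (1 - m))" unfolding q_def by simp_all
  moreover from m have "2 * q\<^sup>2 / (1 + 2 * q\<^sup>2) = m"
    unfolding \<open>q\<^sup>2 = _\<close> by (simp add: field_simps)
  ultimately show ?thesis using KP_data_pyr_normal[OF n] unfolding m_def by blast
qed

section \<open>The octahedron and the antiprisms\<close>

lemma hconv_subset:
  assumes "V \<subseteq> cone hull (convex hull W)"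
  shows "hconv V \<subseteq> hconv W"
proof -
  have cone_conv: "cone (cone hull (convex hull W))" "convex (cone hull (convex hull W))"
    by (simp_all add: cone_cone_hull convex_cone_hull)
  then have "convex hull V \<subseteq> cone hull (convex hull W)"
    using assms hull_minimal by metis
  then have "cone hull (convex hull V) \<subseteq> cone hull (convex hull W)"
    using cone_conv hull_minimal by metis
  then show ?thesis
    unfolding hconv_def cone_hull_expl[symmetric] by blast
qed

lemma axis_point_in_hull_to_verts:
  fixes p q c :: real
  assumes p: "0 < p" and q: "0 \<le> q" and c: "\<bar>c\<bar> \<le> p"
  shows "(sqrt (1 + p\<^sup>2 + q\<^sup>2), c *\<^sub>R axis i 1) \<in> convex hull (to_verts p q)"
proof -
  define j k where "j = i + 1" and "k = i + 2"
  have ijk: "j \<noteq> i" "k \<noteq> i" "k \<noteq> j" unfolding j_def k_def using exhaust_3[of i] by auto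
  define R H where "R = sqrt (1 + p\<^sup>2 + q\<^sup>2)" and "H = convex hull (to_verts p q)"
  have "convex H" unfolding H_def by simp
  have vert: "(R, a *\<^sub>R axis i 1 + b *\<^sub>R axis j 1) \<in> H" if "\<bar>a\<bar> = p" "\<bar>b\<bar> = q" for a b
  proof -
    let ?v = "a *\<^sub>R axis i 1 + b *\<^sub>R axis j 1"
    have "i \<noteq> j \<and> j \<noteq> k \<and> i \<noteq> k \<and> \<bar>?v $ i\<bar> = p \<and> \<bar>?v $ j\<bar> = q \<and> ?v $ k = 0"
      using that ijk by (auto simp: axis_def)
    then have "hpoint ?v \<in> to_verts p q"
      unfolding to_verts_def by blast
    moreover have "hpoint ?v = (R, ?v)"
      using ijk unfolding hpoint_def R_def that[symmetric]
      by (simp add: inner_add_left inner_add_right inner_axis_axis power2_eq_square)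
    ultimately show ?thesis unfolding H_def by (metis hull_inc)
  qed
  have mid: "(R, a *\<^sub>R axis i 1) \<in> H" if "\<bar>a\<bar> = p" for a
  proof -
    have "(1 / 2) *\<^sub>R (R, a *\<^sub>R axis i 1 + q *\<^sub>R axis j 1)
        + (1 / 2) *\<^sub>R (R, a *\<^sub>R axis i 1 + (- q) *\<^sub>R axis j 1) \<in> H"
      using that q by (intro convexD[OF \<open>convex H\<close>] vert) auto
    moreover have "(1 / 2) *\<^sub>R (R, x + q *\<^sub>R y) + (1 / 2) *\<^sub>R (R, x + (- q) *\<^sub>R y) = (R, x)"
      for x y :: "real^3"
      by (simp add: algebra_simps flip: scaleR_add_left)
    ultimately show ?thesis by simp
  qed
  have "((p + c) / (2 * p)) *\<^sub>R (R, p *\<^sub>R axis i 1)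
      + ((p - c) / (2 * p)) *\<^sub>R (R, (- p) *\<^sub>R axis i 1) \<in> H"
    using p c by (intro convexD[OF \<open>convex H\<close>] mid) (auto simp: field_simps)
  moreover have "((p + c) / (2 * p)) *\<^sub>R (R, p *\<^sub>R axis i 1)
      + ((p - c) / (2 * p)) *\<^sub>R (R, (- p) *\<^sub>R axis i 1) = (R, c *\<^sub>R axis i 1)"
    using p by (simp add: field_simps scaleR_left_distrib[symmetric])
  ultimately show ?thesis unfolding H_def R_def by metis
qed

lemma hconv_oct_verts_subset_trunc_oct:
  assumes p: "0 < p" and q: "0 \<le> q" and t: "0 \<le> t"
    and small: "tanh t * sqrt (1 + p\<^sup>2 + q\<^sup>2) \<le> p"
  shows "hconv (oct_verts t) \<subseteq> trunc_oct p q"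
  unfolding trunc_oct_def
proof (rule hconv_subset, rule subsetI)
  define R where "R = sqrt (1 + p\<^sup>2 + q\<^sup>2)"
  have "R > 0" unfolding R_def by (simp add: add_pos_nonneg)
  fix v
  assume "v \<in> oct_verts t"
  then obtain i s where v: "v = (cosh t, (s * sinh t) *\<^sub>R axis i 1)" and s: "s = 1 \<or> s = -1"
    unfolding oct_verts_def by auto
  have "\<bar>s * tanh t * R\<bar> \<le> p"
    using s t small \<open>R > 0\<close> unfolding R_def by (auto simp: abs_mult)
  then have "(R, (s * tanh t * R) *\<^sub>R axis i 1) \<in> convex hull (to_verts p q)"
    unfolding R_def by (rule axis_point_in_hull_to_verts[OF p q])
  moreover have "v = (cosh t / R) *\<^sub>R (R, (s * tanh t * R) *\<^sub>R axis i 1)"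
    unfolding v tanh_def using \<open>R > 0\<close> by simp
  moreover have "cosh t / R \<ge> 0" using \<open>R > 0\<close> by simp
  ultimately show "v \<in> cone hull (convex hull (to_verts p q))"
    unfolding cone_hull_expl by blast
qed

lemma oct_face_v3:
  "oct_face t (v3 s1 s2 s3) =
    {(cosh t, v3 (s1 * sinh t) 0 0), (cosh t, v3 0 (s2 * sinh t) 0), (cosh t, v3 0 0 (s3 * sinh t))}"
proof -
  have "(UNIV :: 3 set) = {1, 2, 3}" using exhaust_3 by auto
  then have "oct_face t (v3 s1 s2 s3)
      = (\<lambda>i. (cosh t, (v3 s1 s2 s3 $ i * sinh t) *\<^sub>R axis i 1)) ` {1, 2, 3}"
    unfolding oct_face_def by auto
  then show ?thesis by (simp add: axis_v3)
qed

lemma mink_oct_face_hex_normal: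
  assumes q: "q > 0" and \<sigma>: "\<sigma> \<in> sign_vecs" and a: "a \<in> oct_face t \<sigma>"
    and height: "(sqrt (1 + 5 * q\<^sup>2) + sqrt (1 + 2 * q\<^sup>2)) * tanh t = 3 * q"
  shows "mink a (hex_normal (2 * q) q \<sigma>) = - sinh t / sqrt 3"
proof -
  obtain s1 s2 s3 where \<sigma>_eq: "\<sigma> = v3 s1 s2 s3" and s: "s1 * s1 = 1" "s2 * s2 = 1" "s3 * s3 = 1"
    using \<sigma> by (rule sign_vecs_v3)
  define r g where "r = sqrt (1 + 5 * q\<^sup>2)" and "g = sqrt (1 + 2 * q\<^sup>2)"
  have "r * sinh t - 3 * q * cosh t = - g * sinh t"
    using height cosh_real_pos[of t] unfolding r_def g_def tanh_def by (simp add: field_simps)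
  moreover have "fst a = cosh t" "snd a \<bullet> \<sigma> = sinh t"
    using a s unfolding \<sigma>_eq oct_face_v3 by (auto simp: algebra_simps)
  then have "mink a (hex_normal (2 * q) q \<sigma>) = (r * sinh t - 3 * q * cosh t) / sqrt (3 + 6 * q\<^sup>2)"
    unfolding hex_normal_eq[OF q \<sigma>] r_def[symmetric] by (simp add: mink_def algebra_simps diff_divide_distrib)
  moreover have "sqrt (3 + 6 * q\<^sup>2) = sqrt 3 * g"
    unfolding g_def real_sqrt_mult[symmetric] by simp
  moreover have "1 + 2 * q\<^sup>2 > 0" by (simp add: add_pos_nonneg)
  ultimately show ?thesis by (simp add: g_def)
qed

lemma refl_rot_mink:
  assumes "q > 0" "\<sigma> \<in> sign_vecs"
  shows "mink (refl_rot (2 * q) q \<sigma> x) (refl_rot (2 * q) q \<sigma> y) = mink x y"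
  unfolding refl_rot_def
  by (simp add: hrot_mink[OF sign_vecs_inner_self[OF assms(2)]]
      hrefl_mink[OF mink_hex_normal_self[OF assms]])

lemma mink_refl_rot:
  assumes "q > 0" "\<sigma> \<in> sign_vecs"
  shows "mink x (refl_rot (2 * q) q \<sigma> y) = mink x (hrot ((1 / sqrt 3) *\<^sub>R \<sigma>) (pi / 3) y)
      - 2 * mink y (hex_normal (2 * q) q \<sigma>) * mink x (hex_normal (2 * q) q \<sigma>)"
  unfolding refl_rot_def
  by (rule mink_hrot_hrefl[OF sign_vecs_inner_self[OF assms(2)] snd_hex_normal[OF assms]])

lemma reg_antiprism_isometryI:
  assumes "c > 1" and iso: "\<And>x y. mink (B x) (B y) = mink x y"
    and "mink a1 a2 = - c" "mink a2 a3 = - c" "mink a3 a1 = - c"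
    and "mink a1 (B a1) = - c" "mink a2 (B a2) = - c" "mink a3 (B a3) = - c"
    and "mink a2 (B a1) = - c" "mink a3 (B a2) = - c" "mink a1 (B a3) = - c"
  shows "reg_antiprism a1 a2 a3 (B a1) (B a2) (B a3)"
  using assms by (simp add: reg_antiprism_def hdist_def)

lemma sym_antiprism_overI:
  assumes "reg_antiprism a1 a2 a3 (refl_rot p q \<sigma> a1) (refl_rot p q \<sigma> a2) (refl_rot p q \<sigma> a3)"
    and "{a1, a2, a3} = oct_face t \<sigma>"
  shows "sym_antiprism_over p q t \<sigma>"
proof -
  have "{refl_rot p q \<sigma> a1, refl_rot p q \<sigma> a2, refl_rot p q \<sigma> a3} = refl_rot p q \<sigma> ` {a1, a2, a3}"
    by simp
  then show ?thesis unfolding sym_antiprism_over_def using assms by blast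
qed

text \<open>Which neighbour of \<open>A\<^sub>i\<close> is joined to \<open>B A\<^sub>i\<close> depends on the orientation
  \<open>P = s\<^sub>1 s\<^sub>2 s\<^sub>3\<close> of \<open>\<sigma>\<close>.\<close>
lemma sym_antiprism_over_sign_vec:
  assumes q: "q > 0" and \<sigma>: "\<sigma> \<in> sign_vecs" and t: "t > 0"
    and height: "(sqrt (1 + 5 * q\<^sup>2) + sqrt (1 + 2 * q\<^sup>2)) * tanh t = 3 * q"
  shows "sym_antiprism_over (2 * q) q t \<sigma>"
proof -
  obtain s1 s2 s3 where \<sigma>_eq: "\<sigma> = v3 s1 s2 s3" and s: "s1 * s1 = 1" "s2 * s2 = 1" "s3 * s3 = 1"
    using \<sigma> by (rule sign_vecs_v3)
  define C S where "C = cosh t" and "S = sinh t"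
  define A1 A2 A3 where "A1 = (C, v3 (s1 * S) 0 0)" and "A2 = (C, v3 0 (s2 * S) 0)"
    and "A3 = (C, v3 0 0 (s3 * S))"
  define B P \<mu> where "B = refl_rot (2 * q) q \<sigma>" and "P = s1 * s2 * s3" and "\<mu> = - S / sqrt 3"
  have face: "oct_face t \<sigma> = {A1, A2, A3}"
    unfolding \<sigma>_eq oct_face_v3 A1_def A2_def A3_def C_def S_def by (simp add: mult.commute)
  have \<nu>: "mink A1 (hex_normal (2 * q) q \<sigma>) = \<mu>" "mink A2 (hex_normal (2 * q) q \<sigma>) = \<mu>"
    "mink A3 (hex_normal (2 * q) q \<sigma>) = \<mu>"
    using mink_oct_face_hex_normal[OF q \<sigma> _ height] unfolding face \<mu>_def S_def by simp_all
  have "\<mu> * \<mu> = S * S / 3" unfolding \<mu>_def by simp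
  then have lateral: "mink A1 (B A1) = - (C * C)" "mink A2 (B A2) = - (C * C)"
    "mink A3 (B A3) = - (C * C)"
    "mink A2 (B A1) = - (C * C) + S * S * (P - 1) / 2" "mink A3 (B A2) = - (C * C) + S * S * (P - 1) / 2"
    "mink A1 (B A3) = - (C * C) + S * S * (P - 1) / 2" "mink A3 (B A1) = - (C * C) - S * S * (P + 1) / 2"
    "mink A1 (B A2) = - (C * C) - S * S * (P + 1) / 2" "mink A2 (B A3) = - (C * C) - S * S * (P + 1) / 2"
    unfolding B_def mink_refl_rot[OF q \<sigma>] \<nu>
    unfolding A1_def A2_def A3_def \<sigma>_eq hrot_pi_div_3_v3 mink_v3 P_def
    using s by algebra+
  have base: "mink A1 A2 = - (C * C)" "mink A2 A3 = - (C * C)" "mink A3 A1 = - (C * C)"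
    "mink A1 A3 = - (C * C)" "mink A3 A2 = - (C * C)" "mink A2 A1 = - (C * C)"
    unfolding A1_def A2_def A3_def by simp_all
  have "C * C > 1"
    using t cosh_square_eq[of t] unfolding C_def by (simp add: power2_eq_square)
  note antiprismI = reg_antiprism_isometryI[OF this refl_rot_mink[OF q \<sigma>, folded B_def]]
  have "P * P = 1" unfolding P_def using s by algebra
  then consider "P = 1" | "P = -1" using square_eq_1_iff by blast
  then show ?thesis
  proof cases
    case 1
    then have "reg_antiprism A1 A2 A3 (B A1) (B A2) (B A3)"
      using base lateral by (intro antiprismI) simp_all
    then show ?thesis unfolding B_def by (rule sym_antiprism_overI) (simp add: face)
  next
    case 2
    then have "reg_antiprism A1 A3 A2 (B A1) (B A3) (B A2)"
      using base lateral by (intro antiprismI) simp_all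
    then show ?thesis unfolding B_def by (rule sym_antiprism_overI) (auto simp: face)
  qed
qed

lemma antiprismatic_octahedron_exists:
  assumes q: "q > 0"
  shows "\<exists>t>0. hconv (oct_verts t) \<subseteq> trunc_oct (2 * q) q
    \<and> (\<forall>\<sigma>\<in>sign_vecs. sym_antiprism_over (2 * q) q t \<sigma>)"
proof -
  define r g where "r = sqrt (1 + 5 * q\<^sup>2)" and "g = sqrt (1 + 2 * q\<^sup>2)"
  have "(2 * q)\<^sup>2 < 1 + 5 * q\<^sup>2" "q\<^sup>2 < 1 + 2 * q\<^sup>2" "r\<^sup>2 \<le> (2 * g)\<^sup>2"
    unfolding r_def g_def by (simp_all add: power_mult_distrib add_pos_nonneg add_nonneg_pos)
  then have rg: "2 * q < r" "q < g" "r \<le> 2 * g"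
    unfolding r_def g_def by (auto intro: real_less_rsqrt power2_le_imp_le)
  define t where "t = artanh (3 * q / (r + g))"
  have tanh: "tanh t = 3 * q / (r + g)"
    unfolding t_def using q rg by (intro tanh_artanh_real) (simp_all add: field_simps)
  then have "tanh t > 0" using q rg by simp
  then have "t > 0" by simp
  moreover have "hconv (oct_verts t) \<subseteq> trunc_oct (2 * q) q"
  proof (rule hconv_oct_verts_subset_trunc_oct)
    have "sqrt (1 + (2 * q)\<^sup>2 + q\<^sup>2) = r" unfolding r_def by (simp add: power_mult_distrib)
    then show "tanh t * sqrt (1 + (2 * q)\<^sup>2 + q\<^sup>2) \<le> 2 * q"
      unfolding tanh using q rg by (simp add: field_simps)
  qed (use q \<open>t > 0\<close> in simp_all)
  moreover have "(r + g) * tanh t = 3 * q" unfolding tanh using q rg by simp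
  then have "\<forall>\<sigma>\<in>sign_vecs. sym_antiprism_over (2 * q) q t \<sigma>"
    using sym_antiprism_over_sign_vec[OF q _ \<open>t > 0\<close>] unfolding r_def g_def by blast
  ultimately show ?thesis by blast
qed

theorem mainTheorem13:
  fixes n :: nat
  assumes "n \<ge> 4"
  shows "(\<exists>p q lam. KP_data n p q lam) \<and>
         (\<forall>p q lam. KP_data n p q lam \<longrightarrow>
            (\<exists>t>0. hconv (oct_verts t) \<subseteq> KP_set p q lam
                 \<and> (\<forall>\<sigma>\<in>sign_vecs. sym_antiprism_over p q t \<sigma>)))"
proof (intro conjI allI impI)
  show "\<exists>p q lam. KP_data n p q lam" using assms by (rule KP_data_exists)
next
  fix p q lam
  assume "KP_data n p q lam"
  then have "0 < q" "p = 2 * q" unfolding KP_data_def using to_regular_iff by auto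
  moreover have "trunc_oct p q \<subseteq> KP_set p q lam" unfolding KP_set_def by blast
  ultimately show "\<exists>t>0. hconv (oct_verts t) \<subseteq> KP_set p q lam
      \<and> (\<forall>\<sigma>\<in>sign_vecs. sym_antiprism_over p q t \<sigma>)"
    using antiprismatic_octahedron_exists by blast
qed

end
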